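(* Let $a\ge 2$ be an integer. Then there are no integers $n\ge 0$ and $c$ such that $B_{n+a}(t)-B_n(t)=c$ as polynomials in $t$.
   Context: The Stern polynomials $B_n(t)\in\mathbb{Z}[t]$, $n\ge 0$, are defined by $B_0(t)=0$, $B_1(t)=1$, $B_{2n}(t)=tB_n(t)$ and $B_{2n+1}(t)=B_n(t)+B_{n+1}(t)$ for $n\ge 1$. *)

theory Defs
  imports "HOL-Computational_Algebra.Polynomial"
begin

function stern_poly :: "nat \<Rightarrow> int poly" where
  "stern_poly n =
     (if n = 0 then 0
      else if n = 1 then 1
      else if even n then [:0, 1:] * stern_poly (n div 2)
      else stern_poly (n div 2) + stern_poly (n div 2 + 1))"
  by auto
termination
  by (relation "measure id") (auto elim!: oddE)

declare stern_poly.simps [simp del]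

lemma stern_poly_0: "stern_poly 0 = 0"
  by (simp add: stern_poly.simps)

lemma stern_poly_1: "stern_poly 1 = 1"
  by (simp add: stern_poly.simps)

lemma stern_poly_even: "n \<ge> 1 \<Longrightarrow> stern_poly (2 * n) = [:0, 1:] * stern_poly n"
  by (subst stern_poly.simps) auto

lemma stern_poly_odd: "n \<ge> 1 \<Longrightarrow> stern_poly (2 * n + 1) = stern_poly n + stern_poly (n + 1)"
  by (subst stern_poly.simps) auto

end

theory Submission
  imports Defs
begin

(* The proof evaluates the Stern polynomials at two points.
   At t = 2 the recurrences become those of the identity map, so B_n(2) = n;
   at t = 0 they become those of the parity indicator, so B_n(0) = n mod 2.
   If B_(n+a) - B_n were a constant c, evaluating at 2 would give c = a,
   while evaluating at 0 would give c = (n+a) mod 2 - n mod 2 <= 1,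
   contradicting a >= 2. *)

lemma stern_induct [case_names zero one even odd]:
  fixes P :: "nat \<Rightarrow> bool" and n :: nat
  assumes zero: "P 0"
    and one: "P 1"
    and even: "\<And>m. m \<ge> 1 \<Longrightarrow> P m \<Longrightarrow> P (2 * m)"
    and odd: "\<And>m. m \<ge> 1 \<Longrightarrow> P m \<Longrightarrow> P (m + 1) \<Longrightarrow> P (2 * m + 1)"
  shows "P n"
proof (induction n rule: less_induct)
  case (less n)
  consider "n = 0" | "n = 1" | "n \<ge> 2" "even n" | "n \<ge> 2" "odd n"
    by linarith
  then show ?case
  proof cases
    case 3
    then obtain m where n: "n = 2 * m" and "m \<ge> 1" by (auto elim!: evenE)
    with less show ?thesis unfolding n by (intro even) auto
  next
    case 4
    then obtain m where n: "n = 2 * m + 1" and "m \<ge> 1" by (auto elim!: oddE)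
    with less show ?thesis unfolding n by (intro odd) auto
  qed (use zero one in auto)
qed

lemma poly_stern_poly_2: "poly (stern_poly n) 2 = int n"
proof (induction n rule: stern_induct)
  case (odd m)
  then show ?case unfolding stern_poly_odd[OF odd(1)] poly_add by simp
qed (simp_all only: stern_poly_0 stern_poly_1 stern_poly_even, simp_all)

lemma poly_stern_poly_0: "poly (stern_poly n) 0 = of_bool (odd n)"
proof (induction n rule: stern_induct)
  case (odd m)
  then show ?case unfolding stern_poly_odd[OF odd(1)] poly_add by simp
qed (simp_all only: stern_poly_0 stern_poly_1 stern_poly_even, simp_all)

theorem corollary5p3:
  fixes a :: nat
  assumes "a \<ge> 2"
  shows "\<not> (\<exists>(n::nat) (c::int). stern_poly (n + a) - stern_poly n = [:c:])"
proof
  assume "\<exists>(n::nat) (c::int). stern_poly (n + a) - stern_poly n = [:c:]"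
  then obtain n c where diff: "stern_poly (n + a) - stern_poly n = [:c:]" by blast
  have "c = poly (stern_poly (n + a) - stern_poly n) 2" by (simp add: diff)
  then have c_eq: "c = int a" by (simp add: poly_stern_poly_2)
  have "c = poly (stern_poly (n + a) - stern_poly n) 0" by (simp add: diff)
  then have "c = of_bool (odd (n + a)) - of_bool (odd n)" by (simp add: poly_stern_poly_0)
  then have "c \<le> 1" by simp
  with c_eq assms show False by simp
qed

end
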